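(* Fix an integer $s\geqslant 2$. For every integer $n\geqslant 2$ let $\overline X_{n,s}$ be the fraction of the $n$ fluids that flow from the centre to the boundary, for a uniformly random coloring in $\Omega_{n,s}$. Let $p_s$ be the flowing probability of a single fluid. Then, as $n\to\infty$, the distribution function of the random variable \[\frac{\sqrt{n}\,(\overline X_{n,s}-p_s)}{\sqrt{p_s(1-p_s)}}\] converges uniformly on $\mathbb R$ to the standard normal distribution function. All these objects are defined in the context.
   Context: Consider the tiling of the plane by regular hexagons of side $1$, called cells. For an integer $s\geqslant2$, fix a cell $O$. Let $M_s$ be the set of all cells lying inside the regular hexagon that is centred at the centre of $O$, has sides of length $s\sqrt3$, and has its sides perpendicular to sides of the cells. The set $M_s$ has $m+1=1+3s(s-1)$ cells. Number the cells other than $O$ as $v_1,\dots,v_m$. Two cells are neighbours if they share a side. A cell of $M_s$ is a boundary cell if it has fewer than six neighbours in $M_s$. For an integer $n\geqslant2$, let $\Omega_{n,s}$ be the set of $n$-tuples $f=(f_1,\dots,f_n)$ of functions $f_i:\{v_1,\dots,v_m\}\to\{0,1\}$ such that $f_1+\dots+f_n\equiv1\pmod 2$ at every cell. These are colorings in $2^{n-1}$ colors. Equip $\Omega_{n,s}$ with the uniform probability measure $P(A)=|A|\,2^{-(n-1)m}$. A path from the centre to the boundary is a sequence of pairwise distinct cells $v_{j_1},\dots,v_{j_t}$ with the following properties: - $v_{j_1}$ is a neighbour of $O$; - $v_{j_l}$ and $v_{j_{l+1}}$ are neighbours for each $l$; - $v_{j_t}$ is a boundary cell. The $i$-th fluid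 flows from the centre to the boundary for $f$ if there is such a path with $f_i(v_{j_l})=1$ for all $l$. Let $A_{n,s,i}$ be this event. Let $X_{n,s,i}$ be its indicator, and set $\overline X_{n,s}=\frac1n\sum_{i=1}^nX_{n,s,i}$. The probability $P(A_{n,s,i})$ does not depend on $n$ or $i$; denote it by $p_s$ (for instance $p_s=P(A_{2,s,1})$). *)

theory Defs
  imports "HOL-Probability.Probability"
begin

text \<open>Cells of the hexagonal tiling are indexed by axial coordinates in int x int.
  The six neighbours of (a,b) are (a+-1,b), (a,b+-1), (a+1,b-1), (a-1,b+1).
  The hexagonal (graph) distance of (a,b) from the origin is max |a| |b| |a+b|.\<close>

type_synonym cell = "int \<times> int"

definition hexnorm :: "cell \<Rightarrow> int" where
  "hexnorm c = max \<bar>fst c\<bar> (max \<bar>snd c\<bar> \<bar>fst c + snd c\<bar>)"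

definition nbr :: "cell \<Rightarrow> cell \<Rightarrow> bool" where
  "nbr c d \<longleftrightarrow> hexnorm (fst d - fst c, snd d - snd c) = 1"

definition O_cell :: cell where "O_cell = (0, 0)"

text \<open>M_s: the cells inside the big hexagon, i.e. at hexagonal distance at most s-1 from O
  (it has 1 + 3 s (s-1) cells).\<close>
definition Mcells :: "nat \<Rightarrow> cell set" where
  "Mcells s = {c. hexnorm c \<le> int s - 1}"

definition Vcells :: "nat \<Rightarrow> cell set" where
  "Vcells s = Mcells s - {O_cell}"

definition boundary_cell :: "nat \<Rightarrow> cell \<Rightarrow> bool" where
  "boundary_cell s v \<longleftrightarrow> v \<in> Mcells s \<and> card {w \<in> Mcells s. nbr v w} < 6"

text \<open>Omega_{n,s}: n-tuples (indexed by fluids 0..n-1) of 0/1 functions on v_1..v_m whose sum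
  is odd at every cell; represented as extensional boolean functions (False outside).\<close>
definition Omega :: "nat \<Rightarrow> nat \<Rightarrow> (nat \<Rightarrow> cell \<Rightarrow> bool) set" where
  "Omega n s = {f. (\<forall>i v. (i \<ge> n \<or> v \<notin> Vcells s) \<longrightarrow> \<not> f i v) \<and>
                   (\<forall>v \<in> Vcells s. odd (card {i. i < n \<and> f i v}))}"

definition path_to_boundary :: "nat \<Rightarrow> cell list \<Rightarrow> bool" where
  "path_to_boundary s ps \<longleftrightarrow> ps \<noteq> [] \<and> distinct ps \<and> set ps \<subseteq> Vcells s \<and>
     nbr O_cell (hd ps) \<and> (\<forall>j. Suc j < length ps \<longrightarrow> nbr (ps ! j) (ps ! Suc j)) \<and>
     boundary_cell s (last ps)"

definition flows :: "nat \<Rightarrow> (nat \<Rightarrow> cell \<Rightarrow> bool) \<Rightarrow> nat \<Rightarrow> bool" where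
  "flows s f i \<longleftrightarrow> (\<exists>ps. path_to_boundary s ps \<and> (\<forall>v \<in> set ps. f i v))"

definition Pu :: "nat \<Rightarrow> nat \<Rightarrow> (nat \<Rightarrow> cell \<Rightarrow> bool) pmf" where
  "Pu n s = pmf_of_set (Omega n s)"

text \<open>p_s = P(A_{2,s,1}) (fluids indexed from 0, so fluid 1 is index 0).\<close>
definition p_flow :: "nat \<Rightarrow> real" where
  "p_flow s = measure_pmf.prob (Pu 2 s) {f. flows s f 0}"

definition Xbar :: "nat \<Rightarrow> nat \<Rightarrow> (nat \<Rightarrow> cell \<Rightarrow> bool) \<Rightarrow> real" where
  "Xbar n s f = (1 / real n) * (\<Sum>i<n. if flows s f i then 1 else 0)"

definition Zn :: "nat \<Rightarrow> nat \<Rightarrow> (nat \<Rightarrow> cell \<Rightarrow> bool) \<Rightarrow> real" where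
  "Zn n s f = sqrt (real n) * (Xbar n s f - p_flow s) / sqrt (p_flow s * (1 - p_flow s))"

definition Fn :: "nat \<Rightarrow> nat \<Rightarrow> real \<Rightarrow> real" where
  "Fn n s x = measure_pmf.prob (Pu n s) {f. Zn n s f \<le> x}"

end

theory Submission
  imports Defs
begin

text \<open>
  Under the uniform measure on \<open>\<Omega>\<^sub>n\<^sub>,\<^sub>s\<close> the first \<open>n - 1\<close> fluids are independent and
  uniformly distributed on the 0/1-colorings of \<open>v\<^sub>1, \<dots>, v\<^sub>m\<close>, while the last fluid is
  determined by the parity constraint. Hence the number of flowing fluids among the first
  \<open>n - 1\<close> is binomial with parameters \<open>n - 1\<close> and \<open>p\<^sub>s\<close>, and the last fluid changes the
  total by at most one, which disappears after division by \<open>\<surd>n\<close>. The de Moivre--Laplace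
  theorem, i.e. the central limit theorem for the coordinates of an infinite Bernoulli product,
  gives pointwise convergence of the distribution functions, and Polya's theorem makes it uniform
  because the normal distribution function is continuous. Finally \<open>0 < p\<^sub>s < 1\<close>: the coloring
  of all cells flows along a straight path to the boundary, the empty coloring does not.
\<close>

definition hex_dirs :: "cell list" where
  "hex_dirs = [(1,0), (-1,0), (0,1), (0,-1), (1,-1), (-1,1)]"

lemma hexnorm_eq_1D:
  assumes "hexnorm d = 1"
  shows "d \<in> set hex_dirs"
proof -
  obtain a b where d: "d = (a, b)" by fastforce
  have "\<bar>a\<bar> \<le> 1" "\<bar>b\<bar> \<le> 1" "\<bar>a + b\<bar> \<le> 1" "\<bar>a\<bar> = 1 \<or> \<bar>b\<bar> = 1 \<or> \<bar>a + b\<bar> = 1"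
    using assms unfolding d hexnorm_def by (auto simp: max_def split: if_splits)
  moreover from this(1,2) have "a \<in> {-1, 0, 1}" "b \<in> {-1, 0, 1}" by auto
  ultimately show ?thesis unfolding d hex_dirs_def by auto
qed

lemma nbrs_subset: "{w. nbr c w} \<subseteq> (\<lambda>d. (fst c + fst d, snd c + snd d)) ` set hex_dirs"
proof
  fix w assume "w \<in> {w. nbr c w}"
  then have "(fst w - fst c, snd w - snd c) \<in> set hex_dirs"
    by (intro hexnorm_eq_1D) (simp add: nbr_def)
  then show "w \<in> (\<lambda>d. (fst c + fst d, snd c + snd d)) ` set hex_dirs"
    by (rule rev_image_eqI) simp
qed

lemma finite_nbrs: "finite {w. nbr c w}"
  by (rule finite_subset[OF nbrs_subset]) simp

lemma card_nbrs_le: "card {w. nbr c w} \<le> 6"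
proof -
  have "card {w. nbr c w} \<le> card ((\<lambda>d. (fst c + fst d, snd c + snd d)) ` set hex_dirs)"
    by (rule card_mono[OF _ nbrs_subset]) simp
  also have "\<dots> \<le> length hex_dirs"
    using card_image_le card_length order_trans by blast
  finally show ?thesis by (simp add: hex_dirs_def)
qed

lemma boundary_cell_corner:
  assumes "s \<ge> 1"
  shows "boundary_cell s (int s - 1, 0)"
proof -
  let ?c = "(int s - 1, 0 :: int)"
  have "(int s, 0) \<in> {w. nbr ?c w} - {w \<in> Mcells s. nbr ?c w}"
    by (simp add: nbr_def hexnorm_def Mcells_def)
  then have "card {w \<in> Mcells s. nbr ?c w} < card {w. nbr ?c w}"
    by (intro psubset_card_mono finite_nbrs) auto
  with card_nbrs_le[of ?c] assms show ?thesis
    by (simp add: boundary_cell_def Mcells_def hexnorm_def)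
qed

definition straight_path :: "nat \<Rightarrow> cell list" where
  "straight_path s = map (\<lambda>j. (int j, 0)) [1..<s]"

lemma path_to_boundary_straight_path:
  assumes "s \<ge> 2"
  shows "path_to_boundary s (straight_path s)"
proof -
  have len: "length (straight_path s) = s - 1"
    by (simp add: straight_path_def)
  have nth: "\<And>j. j < s - 1 \<Longrightarrow> straight_path s ! j = (int j + 1, 0)"
    by (simp add: straight_path_def nth_map_upt)
  have ne: "straight_path s \<noteq> []"
    using assms by (simp add: straight_path_def)
  have "hd (straight_path s) = (1, 0)"
    using assms by (simp add: hd_conv_nth[OF ne] nth)
  moreover have "last (straight_path s) = (int s - 1, 0)"
    using assms by (simp add: last_conv_nth[OF ne] len nth of_nat_diff)
  moreover have "set (straight_path s) \<subseteq> Vcells s"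
    by (auto simp: straight_path_def Vcells_def Mcells_def hexnorm_def O_cell_def)
  moreover have "distinct (straight_path s)"
    by (simp add: straight_path_def distinct_map inj_on_def)
  ultimately show ?thesis
    using ne boundary_cell_corner[of s] assms
    by (auto simp: path_to_boundary_def len nth nbr_def hexnorm_def O_cell_def)
qed

definition colorings :: "nat \<Rightarrow> (cell \<Rightarrow> bool) set" where
  "colorings s = {g. \<forall>v. v \<notin> Vcells s \<longrightarrow> \<not> g v}"

definition percolates :: "nat \<Rightarrow> (cell \<Rightarrow> bool) \<Rightarrow> bool" where
  "percolates s g \<longleftrightarrow> (\<exists>ps. path_to_boundary s ps \<and> (\<forall>v \<in> set ps. g v))"

lemma flows_iff_percolates: "flows s f i \<longleftrightarrow> percolates s (f i)"
  by (simp add: flows_def percolates_def)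

lemma colorings_eq_image_Pow: "colorings s = (\<lambda>A v. v \<in> A) ` Pow (Vcells s)"
proof (intro equalityI subsetI)
  fix g assume "g \<in> colorings s"
  then show "g \<in> (\<lambda>A v. v \<in> A) ` Pow (Vcells s)"
    by (intro rev_image_eqI[of "Collect g"]) (auto simp: colorings_def)
qed (auto simp: colorings_def)

lemma finite_colorings: "finite (colorings s)"
proof -
  have "finite (Vcells s)"
  proof (rule finite_subset)
    show "Vcells s \<subseteq> {-int s..int s} \<times> {-int s..int s}"
      by (auto simp: Vcells_def Mcells_def hexnorm_def)
  qed simp
  then show ?thesis
    by (simp add: colorings_eq_image_Pow)
qed

lemma colorings_nonempty: "colorings s \<noteq> {}"
  by (auto simp: colorings_def)

lemma percolates_full_coloring:
  assumes "s \<ge> 2"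
  shows "percolates s (\<lambda>v. v \<in> Vcells s)"
  using path_to_boundary_straight_path[OF assms]
  by (auto simp: percolates_def path_to_boundary_def)

lemma not_percolates_empty_coloring: "\<not> percolates s (\<lambda>_. False)"
  unfolding percolates_def path_to_boundary_def by (metis last_in_set)

section \<open>The uniform measure on Omega\<close>

definition parity_completion :: "nat \<Rightarrow> nat \<Rightarrow> (nat \<Rightarrow> cell \<Rightarrow> bool) \<Rightarrow> nat \<Rightarrow> cell \<Rightarrow> bool" where
  "parity_completion s k h i =
     (if i < k then h i
      else if i = k then (\<lambda>v. v \<in> Vcells s \<and> even (card {j. j < k \<and> h j v}))
      else (\<lambda>_. False))"

lemma card_Collect_less_Suc:
  "card {i. i < Suc k \<and> P i} = card {i. i < k \<and> P i} + of_bool (P k)"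
proof (cases "P k")
  case True
  then have "{i. i < Suc k \<and> P i} = insert k {i. i < k \<and> P i}"
    by auto
  with True show ?thesis
    by simp
next
  case False
  then have "{i. i < Suc k \<and> P i} = {i. i < k \<and> P i}"
    using less_Suc_eq by auto
  with False show ?thesis
    by simp
qed

lemma parity_completion_restrict:
  "parity_completion s k (restrict h {..<k}) = parity_completion s k h"
  by (intro ext) (simp add: parity_completion_def cong: conj_cong)

lemma parity_completion_in_Omega:
  assumes "\<And>i. i < k \<Longrightarrow> h i \<in> colorings s"
  shows "parity_completion s k h \<in> Omega (Suc k) s"
  unfolding Omega_def
proof (intro CollectI conjI allI impI ballI)
  fix i v
  assume "Suc k \<le> i \<or> v \<notin> Vcells s"
  moreover have "v \<in> Vcells s" if "i < k" "h i v"
    using assms[OF that(1)] that(2) unfolding colorings_def by blast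
  ultimately show "\<not> parity_completion s k h i v"
    by (auto simp: parity_completion_def)
next
  fix v
  assume "v \<in> Vcells s"
  moreover have "{i. i < k \<and> parity_completion s k h i v} = {i. i < k \<and> h i v}"
    by (auto simp: parity_completion_def)
  ultimately show "odd (card {i. i < Suc k \<and> parity_completion s k h i v})"
    by (simp add: card_Collect_less_Suc parity_completion_def)
qed

lemma parity_completion_Omega:
  assumes "f \<in> Omega (Suc k) s"
  shows "parity_completion s k f = f"
proof (intro ext)
  fix i v
  from assms have vanish: "\<forall>i v. (i \<ge> Suc k \<or> v \<notin> Vcells s) \<longrightarrow> \<not> f i v"
    and odd: "\<forall>v \<in> Vcells s. odd (card {j. j < Suc k \<and> f j v})"
    unfolding Omega_def by blast+
  show "parity_completion s k f i v = f i v"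
    using vanish[rule_format, of i v] odd[rule_format, of v]
    by (cases "i < k") (auto simp: parity_completion_def card_Collect_less_Suc Suc_le_eq)
qed

lemma bij_betw_restrict_Omega:
  "bij_betw (\<lambda>f. restrict f {..<k}) (Omega (Suc k) s) (PiE_dflt {..<k} undefined (\<lambda>_. colorings s))"
proof (rule bij_betw_byWitness[where f' = "parity_completion s k"])
  show "\<forall>f \<in> Omega (Suc k) s. parity_completion s k (restrict f {..<k}) = f"
    by (simp add: parity_completion_restrict parity_completion_Omega)
  show "\<forall>h \<in> PiE_dflt {..<k} undefined (\<lambda>_. colorings s). restrict (parity_completion s k h) {..<k} = h"
    by (auto simp: PiE_dflt_def parity_completion_def)
  show "(\<lambda>f. restrict f {..<k}) ` Omega (Suc k) s \<subseteq> PiE_dflt {..<k} undefined (\<lambda>_. colorings s)"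
    by (auto simp: PiE_dflt_def Omega_def colorings_def)
  show "parity_completion s k ` PiE_dflt {..<k} undefined (\<lambda>_. colorings s) \<subseteq> Omega (Suc k) s"
    by (auto simp: PiE_dflt_def intro: parity_completion_in_Omega)
qed

lemma map_pmf_restrict_Pu:
  "map_pmf (\<lambda>f. restrict f {..<k}) (Pu (Suc k) s) = Pi_pmf {..<k} undefined (\<lambda>_. pmf_of_set (colorings s))"
proof -
  note bij = bij_betw_restrict_Omega[of k s]
  have fin: "finite (Omega (Suc k) s)"
    using bij_betw_finite[OF bij] finite_colorings by blast
  have "PiE_dflt {..<k} undefined (\<lambda>_. colorings s) \<noteq> {}"
    unfolding PiE_dflt_empty_iff using colorings_nonempty by blast
  then have ne: "Omega (Suc k) s \<noteq> {}"
    using bij_betw_imp_surj_on[OF bij] by (metis image_empty)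
  have "map_pmf (\<lambda>f. restrict f {..<k}) (Pu (Suc k) s) = pmf_of_set (PiE_dflt {..<k} undefined (\<lambda>_. colorings s))"
    unfolding Pu_def map_pmf_of_set_inj[OF bij_betw_imp_inj_on[OF bij] ne fin] bij_betw_imp_surj_on[OF bij] ..
  also have "\<dots> = Pi_pmf {..<k} undefined (\<lambda>_. pmf_of_set (colorings s))"
    by (rule Pi_pmf_of_set[symmetric]) (auto simp: finite_colorings colorings_nonempty)
  finally show ?thesis .
qed

lemma p_flow_eq_percolation_prob: "p_flow s = measure_pmf.prob (pmf_of_set (colorings s)) {g. percolates s g}"
proof -
  have "map_pmf (\<lambda>f. f 0) (Pu 2 s) = map_pmf (\<lambda>h. h 0) (map_pmf (\<lambda>f. restrict f {..<1}) (Pu (Suc 1) s))"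
    by (simp add: pmf.map_comp o_def numeral_2_eq_2)
  also have "\<dots> = pmf_of_set (colorings s)"
    by (simp add: map_pmf_restrict_Pu Pi_pmf_component)
  finally show ?thesis
    unfolding p_flow_def flows_iff_percolates by (metis measure_map_pmf vimage_Collect_eq)
qed

lemma p_flow_bounds:
  assumes "s \<ge> 2"
  shows "0 < p_flow s" and "p_flow s < 1"
proof -
  let ?C = "colorings s" and ?P = "{g. percolates s g}"
  have prob: "p_flow s = card (?C \<inter> ?P) / card ?C"
    unfolding p_flow_eq_percolation_prob by (rule measure_pmf_of_set[OF colorings_nonempty finite_colorings])
  have "(\<lambda>v. v \<in> Vcells s) \<in> ?C \<inter> ?P"
    using percolates_full_coloring[OF assms] by (simp add: colorings_def)
  then have "card (?C \<inter> ?P) > 0"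
    using finite_colorings by (auto simp: card_gt_0_iff)
  moreover have "card (?C \<inter> ?P) < card ?C"
    using not_percolates_empty_coloring
    by (intro psubset_card_mono finite_colorings) (auto simp: colorings_def)
  ultimately show "0 < p_flow s" and "p_flow s < 1"
    unfolding prob by simp_all
qed

lemma map_pmf_eq_bernoulli_pmf: "map_pmf P p = bernoulli_pmf (measure_pmf.prob p {x. P x})"
proof (rule pmf_eqI)
  fix b
  have "measure_pmf.prob p {x. \<not> P x} = 1 - measure_pmf.prob p {x. P x}"
    using measure_pmf.prob_compl[of "{x. P x}" p] by (simp add: Compl_eq_Diff_UNIV[symmetric] Collect_neg_eq)
  then show "pmf (map_pmf P p) b = pmf (bernoulli_pmf (measure_pmf.prob p {x. P x})) b"
    by (cases b) (simp_all add: pmf_map vimage_def)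
qed

lemma count_flows_binomial:
  "map_pmf (\<lambda>f. card {i \<in> {..<k}. flows s f i}) (Pu (Suc k) s) = binomial_pmf k (p_flow s)"
proof -
  let ?count = "\<lambda>b. card {i \<in> {..<k}. b i}"
  have bernoulli: "map_pmf (percolates s) (pmf_of_set (colorings s)) = bernoulli_pmf (p_flow s)"
    unfolding p_flow_eq_percolation_prob by (rule map_pmf_eq_bernoulli_pmf)
  have "map_pmf (\<lambda>f. card {i \<in> {..<k}. flows s f i}) (Pu (Suc k) s)
      = map_pmf ?count (map_pmf (\<lambda>h. percolates s \<circ> h) (map_pmf (\<lambda>f. restrict f {..<k}) (Pu (Suc k) s)))"
    by (simp add: pmf.map_comp o_def flows_iff_percolates cong: conj_cong)
  also have "\<dots> = map_pmf ?count (Pi_pmf {..<k} (percolates s undefined) (\<lambda>_. bernoulli_pmf (p_flow s)))"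
    unfolding map_pmf_restrict_Pu bernoulli[symmetric] by (subst Pi_pmf_map) simp_all
  also have "\<dots> = binomial_pmf k (p_flow s)"
    by (rule binomial_pmf_altdef'[symmetric]) (auto simp: p_flow_def)
  finally show ?thesis .
qed

section \<open>The de Moivre--Laplace theorem\<close>

lemma (in product_prob_space) indep_vars_components:
  assumes "I \<noteq> {}"
  shows "P.indep_vars M (\<lambda>i \<omega>. \<omega> i) I"
proof (subst P.indep_vars_iff_distr_eq_PiM'[OF assms])
  have "distr (PiM I M) (PiM I M) (\<lambda>\<omega>. restrict \<omega> I) = distr (PiM I M) (PiM I M) (\<lambda>\<omega>. \<omega>)"
    by (intro distr_cong) (auto simp: space_PiM)
  then show "distr (PiM I M) (PiM I M) (\<lambda>\<omega>. \<lambda>i\<in>I. \<omega> i) = PiM I (\<lambda>i. distr (PiM I M) (M i) (\<lambda>\<omega>. \<omega> i))"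
    by (simp add: PiM_component cong: PiM_cong)
qed simp

lemma distr_restrict_Pi_pmf:
  assumes "finite K" "K \<noteq> {}"
  shows "distr (measure_pmf (Pi_pmf K d (\<lambda>_. p))) (PiM K (\<lambda>_. measure_pmf p)) (\<lambda>h. restrict h K)
           = PiM K (\<lambda>_. measure_pmf p)"
proof -
  let ?P = "measure_pmf (Pi_pmf K d (\<lambda>_. p))"
  have "prob_space.indep_vars ?P (\<lambda>_. count_space UNIV) (\<lambda>i h. h i) K"
    using assms(1) by (rule indep_vars_Pi_pmf)
  then have "distr ?P (PiM K (\<lambda>_. count_space UNIV)) (\<lambda>h. restrict h K)
               = PiM K (\<lambda>i. distr ?P (count_space UNIV) (\<lambda>h. h i))"
    by (subst (asm) prob_space.indep_vars_iff_distr_eq_PiM'[OF measure_pmf.prob_space_axioms assms(2)]) simp_all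
  also have "\<dots> = PiM K (\<lambda>_. measure_pmf p)"
    using assms(1) by (intro PiM_cong) (simp_all add: map_pmf_rep_eq[symmetric] Pi_pmf_component)
  finally show ?thesis
    by (rule trans[rotated]) (intro distr_cong sets_PiM_cong, simp_all)
qed

lemma measure_PiM_restrict_eq_Pi_pmf:
  fixes p :: "'a::countable pmf" and K :: "'i set"
  assumes "finite K" "K \<noteq> {}"
  shows "measure (PiM UNIV (\<lambda>_. measure_pmf p)) {\<omega>. P (restrict \<omega> K)}
           = measure_pmf.prob (Pi_pmf K undefined (\<lambda>_. p)) {h. P h}"
proof -
  interpret product_prob_space "\<lambda>_::'i. measure_pmf p" UNIV
    by (intro product_prob_spaceI measure_pmf.prob_space_axioms)
  let ?N = "PiM K (\<lambda>_. measure_pmf p)" and ?Q = "measure_pmf (Pi_pmf K undefined (\<lambda>_. p))"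
  let ?E = "{h \<in> PiE K (\<lambda>_. UNIV). P h}"
  have "sets ?N = sets (PiM K (\<lambda>_. count_space UNIV))"
    by (intro sets_PiM_cong) simp_all
  also have "\<dots> = Pow (PiE K (\<lambda>_. UNIV))"
    using assms(1) by (simp add: count_space_PiM_finite)
  finally have E: "?E \<in> sets ?N"
    by auto
  have "measure (PiM UNIV (\<lambda>_. measure_pmf p)) {\<omega>. P (restrict \<omega> K)}
      = measure (distr (PiM UNIV (\<lambda>_. measure_pmf p)) ?N (\<lambda>\<omega>. restrict \<omega> K)) ?E"
    using E by (subst measure_distr) (auto simp: space_PiM intro!: arg_cong2[where f = measure])
  also have "\<dots> = measure ?N ?E"
    using assms(1) by (simp add: distr_PiM_restrict_finite)
  also have "\<dots> = measure (distr ?Q ?N (\<lambda>h. restrict h K)) ?E"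
    using assms by (simp add: distr_restrict_Pi_pmf)
  also have "\<dots> = measure ?Q {h. P (restrict h K)}"
    using E by (subst measure_distr) (auto simp: space_PiM intro!: arg_cong2[where f = measure])
  also have "\<dots> = measure ?Q {h. P h}"
  proof (rule measure_eq_AE)
    show "AE h in ?Q. h \<in> {h. P (restrict h K)} \<longleftrightarrow> h \<in> {h. P h}"
      using set_Pi_pmf_subset[OF assms(1), of undefined "\<lambda>_. p"]
      by (intro AE_pmfI) (auto simp: restrict_def intro!: arg_cong[where f = P] ext)
  qed simp_all
  finally show ?thesis .
qed

lemma isCont_std_normal_cdf: "isCont (cdf std_normal_distribution) x"
proof -
  interpret real_distribution std_normal_distribution
    by (rule real_dist_normal_dist)
  have "emeasure std_normal_distribution {x} = 0"
    by (simp add: emeasure_density nn_integral_null_set)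
  then show ?thesis
    by (simp add: isCont_cdf measure_def)
qed

lemma distr_PiM_pmf_component:
  "distr (PiM UNIV (\<lambda>_. measure_pmf p)) (measure_pmf p) (\<lambda>\<omega>. \<omega> i) = measure_pmf p"
proof -
  interpret product_prob_space "\<lambda>_. measure_pmf p" UNIV
    by (intro product_prob_spaceI measure_pmf.prob_space_axioms)
  show ?thesis
    by (rule PiM_component) simp
qed

lemma integral_PiM_pmf_component:
  fixes g :: "'a \<Rightarrow> real"
  shows "integral\<^sup>L (PiM UNIV (\<lambda>_. measure_pmf p)) (\<lambda>\<omega>. g (\<omega> i)) = measure_pmf.expectation p g"
proof -
  have "(\<lambda>\<omega>. \<omega> i) \<in> measurable (PiM UNIV (\<lambda>_. measure_pmf p)) (measure_pmf p)"
    by (rule measurable_component_singleton) simp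
  then have "integral\<^sup>L (PiM UNIV (\<lambda>_. measure_pmf p)) (\<lambda>\<omega>. g (\<omega> i))
      = integral\<^sup>L (distr (PiM UNIV (\<lambda>_. measure_pmf p)) (measure_pmf p) (\<lambda>\<omega>. \<omega> i)) g"
    by (intro integral_distr[symmetric]) simp_all
  then show ?thesis
    by (simp only: distr_PiM_pmf_component)
qed

lemma bernoulli_coordinates_clt:
  fixes q :: real
  assumes q: "0 < q" "q < 1"
  shows "weak_conv_m
           (\<lambda>k. distr (PiM UNIV (\<lambda>_. measure_pmf (bernoulli_pmf q))) borel
                  (\<lambda>\<omega>. (\<Sum>i<k. of_bool (\<omega> i) - q) / sqrt (real k * (q * (1 - q)))))
           std_normal_distribution"
proof -
  let ?B = "measure_pmf (bernoulli_pmf q)"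
  let ?M = "PiM (UNIV :: nat set) (\<lambda>_. ?B)"
  interpret product_prob_space "\<lambda>_::nat. ?B" UNIV
    by (intro product_prob_spaceI measure_pmf.prob_space_axioms)
  define X :: "nat \<Rightarrow> (nat \<Rightarrow> bool) \<Rightarrow> real" where "X = (\<lambda>i \<omega>. of_bool (\<omega> i))"
  define \<sigma> where "\<sigma> = sqrt (q * (1 - q))"
  have \<sigma>: "\<sigma> > 0" "\<sigma>\<^sup>2 = q * (1 - q)"
    using q by (simp_all add: \<sigma>_def)
  have component_measurable: "(\<lambda>\<omega>. \<omega> i) \<in> measurable ?M (count_space UNIV)" for i
    using measurable_component_singleton[of i UNIV "\<lambda>_. ?B"] by simp
  have integral_component: "integral\<^sup>L ?M (\<lambda>\<omega>. g (\<omega> i)) = g True * q + g False * (1 - q)"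
    for i and g :: "bool \<Rightarrow> real"
    using q by (simp add: integral_PiM_pmf_component)
  have "P.indep_vars (\<lambda>_. borel) X UNIV"
    unfolding X_def by (rule P.indep_vars_compose2[OF indep_vars_components]) simp_all
  moreover have mean: "P.expectation (X i) = q" for i
    using integral_component[of "\<lambda>b. of_bool b"] by (simp add: X_def)
  moreover have "integrable ?M (\<lambda>\<omega>. (X i \<omega>)\<^sup>2)" for i
    by (rule P.integrable_const_bound[where B = 1])
      (auto simp: X_def intro: measurable_compose[OF component_measurable])
  moreover have "P.variance (X i) = \<sigma>\<^sup>2" for i
  proof -
    have "P.variance (X i) = integral\<^sup>L ?M (\<lambda>\<omega>. (of_bool (\<omega> i) - q)\<^sup>2)"
      using mean by (simp add: X_def)
    also have "\<dots> = (1 - q)\<^sup>2 * q + q\<^sup>2 * (1 - q)"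
      using integral_component[of "\<lambda>b. (of_bool b - q)\<^sup>2" i] by simp
    also have "\<dots> = \<sigma>\<^sup>2"
      unfolding \<sigma>(2) by (simp add: power2_eq_square algebra_simps)
    finally show ?thesis .
  qed
  moreover have "distr ?M borel (X i) = distr ?B borel of_bool" for i
    by (subst distr_PiM_pmf_component[symmetric, of _ i], subst distr_distr)
      (auto simp: X_def o_def component_measurable)
  ultimately have "weak_conv_m (\<lambda>k. distr ?M borel (\<lambda>\<omega>. (\<Sum>i<k. X i \<omega> - q) / sqrt (k * \<sigma>\<^sup>2)))
                     std_normal_distribution"
    using P.central_limit_theorem[OF _ _ \<open>\<sigma> > 0\<close>] by blast
  then show ?thesis
    unfolding X_def \<sigma>(2) .
qed

lemma binomial_cdf_standardized_tendsto:
  fixes q y :: real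
  assumes q: "0 < q" "q < 1"
  shows "(\<lambda>k. measure_pmf.prob (binomial_pmf k q) {j. real j \<le> k * q + y * sqrt (k * (q * (1 - q)))})
           \<longlonglongrightarrow> cdf std_normal_distribution y"
proof -
  let ?M = "PiM (UNIV :: nat set) (\<lambda>_. measure_pmf (bernoulli_pmf q))"
  let ?S = "\<lambda>k \<omega>. (\<Sum>i<k. of_bool (\<omega> i) - q) / sqrt (real k * (q * (1 - q)))"
  have clt: "(\<lambda>k. cdf (distr ?M borel (?S k)) y) \<longlonglongrightarrow> cdf std_normal_distribution y"
    using bernoulli_coordinates_clt[OF q] isCont_std_normal_cdf
    unfolding weak_conv_m_def weak_conv_def by blast
  show ?thesis
  proof (rule Lim_transform_eventually[OF clt], rule eventually_sequentiallyI)
    fix k :: nat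
    assume "k \<ge> 1"
    let ?c = "k * q + y * sqrt (k * (q * (1 - q)))"
    have "?S k \<omega> \<le> y \<longleftrightarrow> real (card {i \<in> {..<k}. \<omega> i}) \<le> ?c" for \<omega>
      using \<open>k \<ge> 1\<close> q by (simp add: sum_subtractf pos_divide_le_eq Int_def algebra_simps)
    moreover have restrict_eq: "{i \<in> {..<k}. restrict \<omega> {..<k} i} = {i \<in> {..<k}. \<omega> i}" for \<omega>
      by auto
    ultimately have "cdf (distr ?M borel (?S k)) y
        = measure ?M {\<omega>. real (card {i \<in> {..<k}. restrict \<omega> {..<k} i}) \<le> ?c}"
      unfolding restrict_eq by (simp add: cdf_def measure_distr space_PiM vimage_def)
    also have "\<dots> = measure_pmf.prob (Pi_pmf {..<k} undefined (\<lambda>_. bernoulli_pmf q))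
                      {h. real (card {i \<in> {..<k}. h i}) \<le> ?c}"
      using \<open>k \<ge> 1\<close> by (intro measure_PiM_restrict_eq_Pi_pmf) (auto simp: lessThan_empty_iff)
    also have "\<dots> = measure_pmf.prob (binomial_pmf k q) {j. real j \<le> ?c}"
      using q by (subst binomial_pmf_altdef'[of "{..<k}"]) (auto simp: vimage_def)
    finally show "cdf (distr ?M borel (?S k)) y = measure_pmf.prob (binomial_pmf k q) {j. real j \<le> ?c}" .
  qed
qed

lemma tendsto_mono_family_at_convergent:
  fixes G :: "nat \<Rightarrow> real \<Rightarrow> real" and \<Phi> :: "real \<Rightarrow> real"
  assumes mono: "\<And>k. mono (G k)"
    and lim: "\<And>y. (\<lambda>k. G k y) \<longlonglongrightarrow> \<Phi> y"
    and cont: "isCont \<Phi> x"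
    and conv: "u \<longlonglongrightarrow> x"
  shows "(\<lambda>k. G k (u k)) \<longlonglongrightarrow> \<Phi> x"
proof (rule order_tendstoI)
  fix a
  assume "a < \<Phi> x"
  then have "\<forall>\<^sub>F z in at x. a < \<Phi> z"
    using cont by (simp add: isCont_def order_tendstoD)
  then obtain d where "d > 0" and d: "\<And>z. z \<noteq> x \<Longrightarrow> dist z x < d \<Longrightarrow> a < \<Phi> z"
    by (auto simp: eventually_at)
  then have "\<forall>\<^sub>F k in sequentially. a < G k (x - d / 2)"
    by (intro order_tendstoD(1)[OF lim]) (simp add: dist_real_def)
  moreover have "\<forall>\<^sub>F k in sequentially. x - d / 2 < u k"
    using \<open>d > 0\<close> by (intro order_tendstoD(1)[OF conv]) simp
  ultimately show "\<forall>\<^sub>F k in sequentially. a < G k (u k)"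
    by eventually_elim (meson mono monoD less_le_trans less_imp_le)
next
  fix a
  assume "\<Phi> x < a"
  then have "\<forall>\<^sub>F z in at x. \<Phi> z < a"
    using cont by (simp add: isCont_def order_tendstoD)
  then obtain d where "d > 0" and d: "\<And>z. z \<noteq> x \<Longrightarrow> dist z x < d \<Longrightarrow> \<Phi> z < a"
    by (auto simp: eventually_at)
  then have "\<forall>\<^sub>F k in sequentially. G k (x + d / 2) < a"
    by (intro order_tendstoD(2)[OF lim]) (simp add: dist_real_def)
  moreover have "\<forall>\<^sub>F k in sequentially. u k < x + d / 2"
    using \<open>d > 0\<close> by (intro order_tendstoD(2)[OF conv]) simp
  ultimately show "\<forall>\<^sub>F k in sequentially. G k (u k) < a"
    by eventually_elim (meson mono monoD le_less_trans less_imp_le)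
qed

lemma binomial_cdf_tendsto_at_convergent:
  fixes q x :: real and c :: "nat \<Rightarrow> real"
  assumes q: "0 < q" "q < 1"
    and conv: "(\<lambda>k. (c k - k * q) / sqrt (k * (q * (1 - q)))) \<longlonglongrightarrow> x"
  shows "(\<lambda>k. measure_pmf.prob (binomial_pmf k q) {j. real j \<le> c k}) \<longlonglongrightarrow> cdf std_normal_distribution x"
proof -
  define G where "G k y = measure_pmf.prob (binomial_pmf k q) {j. real j \<le> k * q + y * sqrt (k * (q * (1 - q)))}"
    for k y
  have "mono (G k)" for k
  proof (rule monoI)
    fix y y' :: real
    assume "y \<le> y'"
    then have "y * sqrt (k * (q * (1 - q))) \<le> y' * sqrt (k * (q * (1 - q)))"
      using q by (intro mult_right_mono) simp_all
    then show "G k y \<le> G k y'"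
      unfolding G_def by (intro measure_pmf.finite_measure_mono) auto
  qed
  moreover have "(\<lambda>k. G k y) \<longlonglongrightarrow> cdf std_normal_distribution y" for y
    unfolding G_def using q by (rule binomial_cdf_standardized_tendsto)
  ultimately have "(\<lambda>k. G k ((c k - k * q) / sqrt (k * (q * (1 - q))))) \<longlonglongrightarrow> cdf std_normal_distribution x"
    using isCont_std_normal_cdf conv by (rule tendsto_mono_family_at_convergent)
  moreover have "\<forall>\<^sub>F k in sequentially.
      G k ((c k - k * q) / sqrt (k * (q * (1 - q)))) = measure_pmf.prob (binomial_pmf k q) {j. real j \<le> c k}"
  proof (rule eventually_sequentiallyI)
    fix k :: nat
    assume "k \<ge> 1"
    then have "sqrt (k * (q * (1 - q))) \<noteq> 0"
      using q by simp
    then show "G k ((c k - k * q) / sqrt (k * (q * (1 - q)))) = measure_pmf.prob (binomial_pmf k q) {j. real j \<le> c k}"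
      unfolding G_def by (simp del: real_sqrt_eq_zero_cancel_iff)
  qed
  ultimately show ?thesis
    by (rule Lim_transform_eventually)
qed

section \<open>Polya's theorem\<close>

lemma continuous_distribution_function_attains:
  fixes G :: "real \<Rightarrow> real"
  assumes cont: "\<And>x. isCont G x"
    and bot: "(G \<longlongrightarrow> 0) at_bot" and top: "(G \<longlongrightarrow> 1) at_top"
    and c: "0 < c" "c < 1"
  obtains t where "G t = c"
proof -
  obtain a where a: "\<And>x. x \<le> a \<Longrightarrow> G x < c"
    using order_tendstoD(2)[OF bot c(1)] by (auto simp: eventually_at_bot_linorder)
  obtain b where b: "\<And>x. x \<ge> b \<Longrightarrow> G x > c"
    using order_tendstoD(1)[OF top c(2)] by (auto simp: eventually_at_top_linorder)
  have "\<exists>t. a \<le> t \<and> t \<le> max a b \<and> G t = c"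
    using a[of a] b[of "max a b"] cont
    by (intro IVT') (auto intro: continuous_at_imp_continuous_on)
  then show ?thesis
    using that by blast
qed

lemma quantile_above:
  fixes G :: "real \<Rightarrow> real" and t :: "nat \<Rightarrow> real" and m :: nat
  assumes mono: "mono G" and "0 \<le> G x" and "m > 0"
    and t: "\<And>j. j \<in> {1..<m} \<Longrightarrow> G (t j) = j / m"
  shows "G x \<ge> 1 - 1 / m \<or> (\<exists>j \<in> {1..<m}. x < t j \<and> G (t j) \<le> G x + 1 / m)"
proof (cases "nat \<lfloor>m * G x\<rfloor> + 1 < m")
  case True
  define j where "j = nat \<lfloor>m * G x\<rfloor> + 1"
  have j: "j \<in> {1..<m}"
    using True by (simp add: j_def)
  have "real j - 1 \<le> m * G x" "m * G x < j"
    using \<open>0 \<le> G x\<close> by (simp_all add: j_def) linarith+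
  moreover have "m * G (t j) = j" "m * (G x + 1 / m) = m * G x + 1"
    using t[OF j] \<open>m > 0\<close> by (simp_all add: field_simps)
  ultimately have "m * G x < m * G (t j)" "m * G (t j) \<le> m * (G x + 1 / m)"
    by linarith+
  then have "G x < G (t j)" "G (t j) \<le> G x + 1 / m"
    using \<open>m > 0\<close> by (simp_all only: of_nat_0_less_iff mult_less_cancel_left_pos mult_le_cancel_left_pos)
  moreover from this(1) have "x < t j"
    using mono by (meson monoD not_le)
  ultimately show ?thesis
    using j by blast
next
  case False
  have "0 \<le> \<lfloor>m * G x\<rfloor>"
    using \<open>0 \<le> G x\<close> by simp
  with False have "real m - 1 \<le> m * G x"
    by linarith
  then show ?thesis
    using \<open>m > 0\<close> by (simp add: field_simps)
qed

lemma quantile_below: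
  fixes G :: "real \<Rightarrow> real" and t :: "nat \<Rightarrow> real" and m :: nat
  assumes mono: "mono G" and "G x \<le> 1" and "m > 0"
    and t: "\<And>j. j \<in> {1..<m} \<Longrightarrow> G (t j) = j / m"
  shows "G x \<le> 1 / m \<or> (\<exists>j \<in> {1..<m}. t j < x \<and> G x \<le> G (t j) + 1 / m)"
proof (cases "\<lceil>m * G x\<rceil> \<ge> 2")
  case True
  define j where "j = nat \<lceil>m * G x\<rceil> - 1"
  have "\<lceil>m * G x\<rceil> \<le> m"
    using \<open>G x \<le> 1\<close> by (simp add: ceiling_le_iff mult_left_le)
  with True have j: "j \<in> {1..<m}"
    by (simp add: j_def) linarith
  have "real j < m * G x" "m * G x \<le> j + 1"
    using True by (simp_all add: j_def) linarith+
  moreover have "m * G (t j) = j" "m * (G (t j) + 1 / m) = j + 1"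
    using t[OF j] \<open>m > 0\<close> by (simp_all add: field_simps)
  ultimately have "m * G (t j) < m * G x" "m * G x \<le> m * (G (t j) + 1 / m)"
    by linarith+
  then have "G (t j) < G x" "G x \<le> G (t j) + 1 / m"
    using \<open>m > 0\<close> by (simp_all only: of_nat_0_less_iff mult_less_cancel_left_pos mult_le_cancel_left_pos)
  moreover from this(1) have "t j < x"
    using mono by (meson monoD not_le)
  ultimately show ?thesis
    using j by blast
next
  case False
  then have "m * G x \<le> 1"
    by linarith
  then show ?thesis
    using \<open>m > 0\<close> by (simp add: field_simps)
qed

lemma close_on_quantiles_imp_close:
  fixes f G :: "real \<Rightarrow> real" and t :: "nat \<Rightarrow> real" and m :: nat
  assumes f_mono: "mono f" and f_bounds: "\<And>x. 0 \<le> f x \<and> f x \<le> 1"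
    and G_mono: "mono G" and G_bounds: "\<And>x. 0 \<le> G x \<and> G x \<le> 1"
    and "m > 0" and "e > 0"
    and t: "\<And>j. j \<in> {1..<m} \<Longrightarrow> G (t j) = j / m"
    and close: "\<And>j. j \<in> {1..<m} \<Longrightarrow> \<bar>f (t j) - G (t j)\<bar> < e"
  shows "\<bar>f x - G x\<bar> < e + 1 / m"
proof -
  have "0 \<le> G x" "G x \<le> 1"
    using G_bounds[of x] by simp_all
  have "G x \<ge> 1 - 1 / m \<or> (\<exists>j \<in> {1..<m}. x < t j \<and> G (t j) \<le> G x + 1 / m)"
    using G_mono \<open>0 \<le> G x\<close> \<open>m > 0\<close> t by (rule quantile_above)
  then have "f x < G x + e + 1 / m"
  proof (elim disjE bexE conjE)
    fix j
    assume "j \<in> {1..<m}" "x < t j" "G (t j) \<le> G x + 1 / m"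
    moreover from \<open>x < t j\<close> have "f x \<le> f (t j)"
      using f_mono by (meson monoD less_imp_le)
    ultimately show ?thesis
      using close[of j] by linarith
  qed (use f_bounds[of x] \<open>e > 0\<close> in auto)
  moreover have "G x \<le> 1 / m \<or> (\<exists>j \<in> {1..<m}. t j < x \<and> G x \<le> G (t j) + 1 / m)"
    using G_mono \<open>G x \<le> 1\<close> \<open>m > 0\<close> t by (rule quantile_below)
  then have "G x - e - 1 / m < f x"
  proof (elim disjE bexE conjE)
    fix j
    assume "j \<in> {1..<m}" "t j < x" "G x \<le> G (t j) + 1 / m"
    moreover from \<open>t j < x\<close> have "f (t j) \<le> f x"
      using f_mono by (meson monoD less_imp_le)
    ultimately show ?thesis
      using close[of j] by linarith
  qed (use f_bounds[of x] \<open>e > 0\<close> in auto)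
  ultimately show ?thesis
    by linarith
qed

lemma polya_uniform_convergence:
  fixes F :: "nat \<Rightarrow> real \<Rightarrow> real" and G :: "real \<Rightarrow> real"
  assumes F_mono: "\<And>n. mono (F n)" and F_bounds: "\<And>n x. 0 \<le> F n x \<and> F n x \<le> 1"
    and lim: "\<And>x. (\<lambda>n. F n x) \<longlonglongrightarrow> G x"
    and G_mono: "mono G" and G_bounds: "\<And>x. 0 \<le> G x \<and> G x \<le> 1"
    and cont: "\<And>x. isCont G x"
    and bot: "(G \<longlongrightarrow> 0) at_bot" and top: "(G \<longlongrightarrow> 1) at_top"
  shows "uniform_limit UNIV F G sequentially"
  unfolding uniform_limit_sequentially_iff
proof (intro allI impI)
  fix \<epsilon> :: real
  assume "\<epsilon> > 0"
  obtain m :: nat where "2 / \<epsilon> < m"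
    using reals_Archimedean2 by blast
  moreover have "0 < 2 / \<epsilon>"
    using \<open>\<epsilon> > 0\<close> by simp
  ultimately have "real m > 0"
    by linarith
  with \<open>2 / \<epsilon> < m\<close> \<open>\<epsilon> > 0\<close> have "m > 0" "1 / m < \<epsilon> / 2"
    by (simp_all add: field_simps)
  have "\<exists>t. G t = j / m" if "j \<in> {1..<m}" for j
    using that continuous_distribution_function_attains[OF cont bot top, of "j / m"] by auto
  then obtain t where t: "\<And>j. j \<in> {1..<m} \<Longrightarrow> G (t j) = j / m"
    by metis
  have "\<forall>\<^sub>F n in sequentially. \<forall>j \<in> {1..<m}. dist (F n (t j)) (G (t j)) < \<epsilon> / 2"
    using \<open>\<epsilon> > 0\<close> by (intro eventually_ball_finite ballI tendstoD[OF lim]) simp_all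
  then obtain N where N: "\<And>n j. n \<ge> N \<Longrightarrow> j \<in> {1..<m} \<Longrightarrow> \<bar>F n (t j) - G (t j)\<bar> < \<epsilon> / 2"
    unfolding eventually_sequentially dist_real_def by blast
  have "\<bar>F n x - G x\<bar> < \<epsilon>" if "n \<ge> N" for n x
  proof -
    have "\<bar>F n x - G x\<bar> < \<epsilon> / 2 + 1 / m"
      using \<open>\<epsilon> > 0\<close> N[OF that]
      by (intro close_on_quantiles_imp_close[OF F_mono F_bounds G_mono G_bounds \<open>m > 0\<close> _ t]) simp_all
    with \<open>1 / m < \<epsilon> / 2\<close> show ?thesis
      by linarith
  qed
  then show "\<exists>N. \<forall>n \<ge> N. \<forall>x \<in> UNIV. dist (F n x) (G x) < \<epsilon>"
    by (auto simp: dist_real_def)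
qed

lemma standardized_le_iff:
  fixes S p x \<sigma> :: real and n :: nat
  assumes "n > 0" "\<sigma> > 0"
  shows "sqrt n * ((1 / n) * S - p) / \<sigma> \<le> x \<longleftrightarrow> S \<le> n * p + x * \<sigma> * sqrt n"
proof -
  have "sqrt n * ((1 / n) * S - p) = (S - n * p) / sqrt n"
    using assms(1) by (simp add: field_simps flip: real_sqrt_mult)
  then show ?thesis
    using assms by (simp add: pos_divide_le_eq algebra_simps)
qed

lemma Fn_between_binomial_cdfs:
  fixes x :: real and k :: nat
  assumes "s \<ge> 2"
  defines "q \<equiv> p_flow s"
  defines "c \<equiv> real (Suc k) * q + x * sqrt (q * (1 - q)) * sqrt (Suc k)"
  shows "measure_pmf.prob (binomial_pmf k q) {j. real j \<le> c - 1} \<le> Fn (Suc k) s x"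
    and "Fn (Suc k) s x \<le> measure_pmf.prob (binomial_pmf k q) {j. real j \<le> c}"
proof -
  define C where "C f = real (card {i \<in> {..<k}. flows s f i})" for f
  have "0 < q" "q < 1"
    using p_flow_bounds[OF assms(1)] by (simp_all add: q_def)
  then have "Zn (Suc k) s f \<le> x \<longleftrightarrow> (\<Sum>i<Suc k. of_bool (flows s f i)) \<le> c" for f
    unfolding Zn_def Xbar_def c_def q_def[symmetric] of_bool_def[symmetric]
    by (intro standardized_le_iff) simp_all
  then have Fn: "Fn (Suc k) s x = measure_pmf.prob (Pu (Suc k) s) {f. C f + of_bool (flows s f k) \<le> c}"
    by (simp add: Fn_def C_def Int_def)
  have binomial: "measure_pmf.prob (binomial_pmf k q) {j. real j \<le> d} = measure_pmf.prob (Pu (Suc k) s) {f. C f \<le> d}"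
    for d
    by (simp add: q_def C_def flip: count_flows_binomial)
  show "measure_pmf.prob (binomial_pmf k q) {j. real j \<le> c - 1} \<le> Fn (Suc k) s x"
    unfolding Fn binomial by (intro measure_pmf.finite_measure_mono) auto
  show "Fn (Suc k) s x \<le> measure_pmf.prob (binomial_pmf k q) {j. real j \<le> c}"
    unfolding Fn binomial by (intro measure_pmf.finite_measure_mono) auto
qed

lemma standardized_threshold_tendsto:
  fixes q x \<delta> :: real
  assumes "0 < q" "q < 1"
  shows "(\<lambda>k. (real (Suc k) * q + x * sqrt (q * (1 - q)) * sqrt (Suc k) - \<delta> - k * q)
              / sqrt (k * (q * (1 - q)))) \<longlonglongrightarrow> x"
proof -
  define \<sigma> where "\<sigma> = sqrt (q * (1 - q))"
  have "\<sigma> > 0"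
    using assms by (simp add: \<sigma>_def)
  have "(\<lambda>k. (q - \<delta>) / \<sigma> * sqrt (1 / k) + x * sqrt (1 + 1 / k))
          \<longlonglongrightarrow> (q - \<delta>) / \<sigma> * sqrt 0 + x * sqrt (1 + 0)"
    by (intro tendsto_intros)
  moreover have "\<forall>\<^sub>F k in sequentially. (q - \<delta>) / \<sigma> * sqrt (1 / k) + x * sqrt (1 + 1 / k)
                   = (real (Suc k) * q + x * \<sigma> * sqrt (Suc k) - \<delta> - k * q) / sqrt (k * (q * (1 - q)))"
  proof (rule eventually_sequentiallyI)
    fix k :: nat
    assume "k \<ge> 1"
    then have "sqrt (1 + 1 / k) = sqrt (Suc k) / sqrt k"
      by (simp add: field_simps flip: real_sqrt_divide)
    moreover have "sqrt (k * (q * (1 - q))) = sqrt k * \<sigma>"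
      by (simp add: \<sigma>_def real_sqrt_mult)
    ultimately show "(q - \<delta>) / \<sigma> * sqrt (1 / k) + x * sqrt (1 + 1 / k)
                   = (real (Suc k) * q + x * \<sigma> * sqrt (Suc k) - \<delta> - k * q) / sqrt (k * (q * (1 - q)))"
      using \<open>k \<ge> 1\<close> \<open>\<sigma> > 0\<close> by (simp add: real_sqrt_divide field_simps)
  qed
  ultimately show ?thesis
    unfolding \<sigma>_def by (simp add: Lim_transform_eventually)
qed

lemma Fn_tendsto_std_normal_cdf:
  fixes x :: real
  assumes "s \<ge> 2"
  shows "(\<lambda>n. Fn n s x) \<longlonglongrightarrow> cdf std_normal_distribution x"
proof -
  define q where "q = p_flow s"
  define \<sigma> where "\<sigma> = sqrt (q * (1 - q))"
  define c where "c k = real (Suc k) * q + x * \<sigma> * sqrt (Suc k)" for k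
  have q: "0 < q" "q < 1"
    using p_flow_bounds[OF assms] by (simp_all add: q_def)
  have shifted: "(\<lambda>k. (c k - \<delta> - k * q) / sqrt (k * (q * (1 - q)))) \<longlonglongrightarrow> x" for \<delta>
    unfolding c_def \<sigma>_def using q by (rule standardized_threshold_tendsto)
  have lower: "(\<lambda>k. measure_pmf.prob (binomial_pmf k q) {j. real j \<le> c k - 1}) \<longlonglongrightarrow> cdf std_normal_distribution x"
    using binomial_cdf_tendsto_at_convergent[OF q shifted[of 1]] by (simp add: algebra_simps)
  have upper: "(\<lambda>k. measure_pmf.prob (binomial_pmf k q) {j. real j \<le> c k}) \<longlonglongrightarrow> cdf std_normal_distribution x"
    using binomial_cdf_tendsto_at_convergent[OF q shifted[of 0]] by simp
  have "measure_pmf.prob (binomial_pmf k q) {j. real j \<le> c k - 1} \<le> Fn (Suc k) s x"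
    and "Fn (Suc k) s x \<le> measure_pmf.prob (binomial_pmf k q) {j. real j \<le> c k}" for k
    unfolding c_def \<sigma>_def q_def by (rule Fn_between_binomial_cdfs[OF assms])+
  then have "(\<lambda>k. Fn (Suc k) s x) \<longlonglongrightarrow> cdf std_normal_distribution x"
    by (intro tendsto_sandwich[OF _ _ lower upper] always_eventually allI)
  then show ?thesis
    by (rule LIMSEQ_imp_Suc)
qed

theorem theorem1:
  fixes s :: nat
  assumes "s \<ge> 2"
  shows "\<forall>\<epsilon>>0. \<exists>N\<ge>2. \<forall>n\<ge>N. \<forall>x::real.
           \<bar>Fn n s x - cdf std_normal_distribution x\<bar> < \<epsilon>"
proof (intro allI impI)
  fix \<epsilon> :: real
  assume "\<epsilon> > 0"
  interpret real_distribution std_normal_distribution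
    by (rule real_dist_normal_dist)
  have "uniform_limit UNIV (\<lambda>n. Fn n s) (cdf std_normal_distribution) sequentially"
  proof (rule polya_uniform_convergence)
    show "mono (Fn n s)" for n
      unfolding Fn_def by (intro monoI measure_pmf.finite_measure_mono) auto
    show "0 \<le> Fn n s x \<and> Fn n s x \<le> 1" for n x
      by (simp add: Fn_def)
  qed (simp_all add: Fn_tendsto_std_normal_cdf[OF assms] isCont_std_normal_cdf
      mono_def cdf_nondecreasing cdf_nonneg cdf_bounded_prob cdf_lim_at_bot cdf_lim_at_top_prob)
  with \<open>\<epsilon> > 0\<close> obtain N where "\<forall>n \<ge> N. \<forall>x. \<bar>Fn n s x - cdf std_normal_distribution x\<bar> < \<epsilon>"
    unfolding uniform_limit_sequentially_iff dist_real_def by blast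
  then show "\<exists>N\<ge>2. \<forall>n\<ge>N. \<forall>x::real. \<bar>Fn n s x - cdf std_normal_distribution x\<bar> < \<epsilon>"
    by (intro exI[of _ "max N 2"]) auto
qed

end
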